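(* There exists a pair of unbiased weighing matrices of order $13$ and weight $9$.
   Context: A weighing matrix of order $n$ and weight $k$ is an $n\times n$ matrix $W$ with entries in $\{1,-1,0\}$ such that $WW^T=kI_n$. Two weighing matrices $W_1,W_2$ of order $n$ and weight $k$ are unbiased if $\frac{1}{\sqrt{k}}W_1W_2^T$ is also a weighing matrix of order $n$ and weight $k$. *)

theory Defs
  imports "HOL-Analysis.Analysis" "HOL-Library.Numeral_Type"
begin

definition weighing_matrix :: "real \<Rightarrow> real^'n::finite^'n \<Rightarrow> bool" where
  "weighing_matrix k W \<longleftrightarrow>
     (\<forall>i j. W $ i $ j \<in> {1, -1, 0}) \<and> W ** transpose W = k *\<^sub>R mat 1"

definition unbiased_weighing :: "real \<Rightarrow> real^'n::finite^'n \<Rightarrow> real^'n^'n \<Rightarrow> bool" where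
  "unbiased_weighing k W1 W2 \<longleftrightarrow>
     weighing_matrix k W1 \<and> weighing_matrix k W2 \<and>
     weighing_matrix k ((1 / sqrt k) *\<^sub>R (W1 ** transpose W2))"

end

theory Submission
  imports Defs
begin

text \<open>Both matrices are group-circulant over \<open>\<int>/13\<close>. For circulant matrices with first rows
  \<open>f\<close> and \<open>g\<close>, the product \<open>W\<^sub>f W\<^sub>g\<^sup>T\<close> is again circulant, with first row the periodic
  correlation of \<open>f\<close> and \<open>g\<close>. Hence being a weighing matrix amounts to \<open>f\<close> having a
  two-valued autocorrelation, and unbiasedness to the cross-correlation of the two rows being
  \<open>\<surd>k\<close> times the first row of a third weighing matrix; for three explicit rows
  these are finitely many correlation values, checked by evaluation.\<close>

definition circulant :: "('n::{finite,ab_group_add} \<Rightarrow> real) \<Rightarrow> ((real, 'n) vec, 'n) vec" where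
  "circulant f = (\<chi> i j. f (j - i))"

lemma circulant_nth [simp]: "circulant f $ i $ j = f (j - i)"
  by (simp add: circulant_def)

definition periodic_correlation ::
    "('n::{finite,ab_group_add} \<Rightarrow> real) \<Rightarrow> ('n \<Rightarrow> real) \<Rightarrow> 'n \<Rightarrow> real" where
  "periodic_correlation f g d = (\<Sum>m\<in>UNIV. f (m + d) * g m)"

lemma circulant_mult_transpose:
  fixes f g :: "'n::{finite,ab_group_add} \<Rightarrow> real"
  shows "circulant f ** transpose (circulant g) = circulant (periodic_correlation f g)"
proof -
  have "(\<Sum>k\<in>UNIV. f (k - i) * g (k - j)) = periodic_correlation f g (j - i)" for i j :: 'n
    unfolding periodic_correlation_def
    by (rule sum.reindex_bij_witness[of _ "\<lambda>m. m + j" "\<lambda>k. k - j"])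
       (simp_all add: algebra_simps)
  then show ?thesis
    by (simp add: vec_eq_iff matrix_matrix_mult_def transpose_def)
qed

lemma circulant_delta: "circulant (\<lambda>d. if d = 0 then k else 0) = k *\<^sub>R mat 1"
  by (auto simp: vec_eq_iff mat_def)

lemma weighing_matrix_circulant:
  assumes "range f \<subseteq> {1, -1, 0}"
    and "periodic_correlation f f = (\<lambda>d. if d = 0 then k else 0)"
  shows "weighing_matrix k (circulant f)"
  using assms unfolding weighing_matrix_def circulant_mult_transpose
  by (auto simp: circulant_delta)

lemma unbiased_weighing_circulant:
  assumes "weighing_matrix k (circulant f)" "weighing_matrix k (circulant g)"
    and "weighing_matrix k (circulant h)" "k \<noteq> 0"
    and "periodic_correlation f g = (\<lambda>d. sqrt k * h d)"
  shows "unbiased_weighing k (circulant f) (circulant g)"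
proof -
  have "circulant f ** transpose (circulant g) = sqrt k *\<^sub>R circulant h"
    by (simp add: circulant_mult_transpose assms(5) vec_eq_iff)
  then have "(1 / sqrt k) *\<^sub>R (circulant f ** transpose (circulant g)) = circulant h"
    using assms(4) by simp
  then show ?thesis
    using assms(1-3) unfolding unbiased_weighing_def by simp
qed

text \<open>A list \<open>v\<close> of length \<open>n\<close> read as a function on \<open>\<int>/n\<close>, so that \<open>v\<close> becomes the first row
  of \<open>circulant (list_seq v)\<close>.\<close>

definition list_seq :: "int list \<Rightarrow> 'a::finite bit1 \<Rightarrow> real" where
  "list_seq v x = of_int (v ! nat (Rep_bit1 x))"

definition list_correlation :: "int list \<Rightarrow> int list \<Rightarrow> nat \<Rightarrow> int" where
  "list_correlation v w d = (\<Sum>m<length v. v ! ((m + d) mod length v) * w ! m)"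

lemma Rep_bit1_nonneg: "0 \<le> Rep_bit1 x"
  using Rep_bit1[of x] by simp

lemma Rep_bit1_less_card: "Rep_bit1 (x :: 'a::finite bit1) < int CARD('a bit1)"
  by (rule bit1.Rep_less_n)

lemma Rep_bit1_add:
  "Rep_bit1 (x + y :: 'a::finite bit1) = (Rep_bit1 x + Rep_bit1 y) mod int CARD('a bit1)"
  unfolding bit1.add_def by (rule bit1.Rep_Abs_mod)

lemma sum_bit1_eq:
  "(\<Sum>x\<in>UNIV. g (nat (Rep_bit1 (x :: 'a::finite bit1)))) = (\<Sum>m<CARD('a bit1). g m)"
  by (rule sum.reindex_bij_witness[of _ "\<lambda>m. Abs_bit1 (int m)" "\<lambda>x. nat (Rep_bit1 x)"])
     (auto simp: Rep_bit1_nonneg Rep_bit1_less_card Rep_bit1_inverse bit1.Abs_inverse nat_less_iff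
       simp del: card_bit1)

lemma periodic_correlation_list_seq:
  fixes d :: "'a::finite bit1"
  assumes "length v = CARD('a bit1)"
  shows "periodic_correlation (list_seq v) (list_seq w) d
           = of_int (list_correlation v w (nat (Rep_bit1 d)))"
proof -
  define G where "G m = real_of_int (v ! ((m + nat (Rep_bit1 d)) mod CARD('a bit1)) * w ! m)"
    for m
  have "nat (Rep_bit1 (m + d)) = (nat (Rep_bit1 m) + nat (Rep_bit1 d)) mod CARD('a bit1)"
    for m :: "'a bit1"
    by (simp add: Rep_bit1_add Rep_bit1_nonneg nat_mod_distrib nat_add_distrib del: card_bit1)
  then have "periodic_correlation (list_seq v) (list_seq w) d
               = (\<Sum>x::'a bit1\<in>UNIV. G (nat (Rep_bit1 x)))"
    by (simp add: periodic_correlation_def list_seq_def G_def)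
  also have "\<dots> = (\<Sum>m<CARD('a bit1). G m)"
    by (rule sum_bit1_eq)
  also have "\<dots> = of_int (list_correlation v w (nat (Rep_bit1 d)))"
    by (simp add: G_def list_correlation_def assms)
  finally show ?thesis .
qed

lemma list_seq_index_less:
  "length v = CARD('a::finite bit1) \<Longrightarrow> nat (Rep_bit1 (x :: 'a bit1)) < length v"
  using Rep_bit1_less_card[of x] Rep_bit1_nonneg[of x] by linarith

lemma weighing_matrix_circulant_list_seq:
  fixes v :: "int list"
  assumes len: "length v = CARD('a::finite bit1)" and "set v \<subseteq> {1, -1, 0}"
    and corr: "\<forall>d<length v. list_correlation v v d = (if d = 0 then k else 0)"
  shows "weighing_matrix (of_int k) (circulant (list_seq v :: 'a bit1 \<Rightarrow> real))"
proof (rule weighing_matrix_circulant)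
  show "range (list_seq v :: 'a bit1 \<Rightarrow> real) \<subseteq> {1, -1, 0}"
    using assms(2) list_seq_index_less[OF len] nth_mem by (fastforce simp: list_seq_def)
  have "nat (Rep_bit1 d) = 0 \<longleftrightarrow> d = 0" for d :: "'a bit1"
    using Rep_bit1_nonneg[of d] bit1.Rep_inject_sym[of d 0] by (simp add: bit1.Rep_0)
  then show "periodic_correlation (list_seq v) (list_seq v :: 'a bit1 \<Rightarrow> real)
               = (\<lambda>d. if d = 0 then of_int k else 0)"
    using corr list_seq_index_less[OF len] by (auto simp: periodic_correlation_list_seq len)
qed

lemma periodic_correlation_list_seq_scaled:
  fixes v w u :: "int list"
  assumes len: "length v = CARD('a::finite bit1)"
    and corr: "\<forall>d<length v. list_correlation v w d = c * u ! d"
  shows "periodic_correlation (list_seq v) (list_seq w)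
           = (\<lambda>d :: 'a bit1. of_int c * list_seq u d)"
  using corr list_seq_index_less[OF len]
  by (auto simp: periodic_correlation_list_seq len list_seq_def)

text \<open>First rows of \<open>W\<^sub>1\<close>, \<open>W\<^sub>2\<close> and \<open>W\<^sub>1 W\<^sub>2\<^sup>T / 3\<close>.\<close>

definition row1 :: "int list" where
  "row1 = [0, 0, 1, 0, 1, 1, 1, -1, -1, 0, 1, -1, 1]"

definition row2 :: "int list" where
  "row2 = [0, 1, -1, 1, 1, -1, -1, 0, 0, 1, 1, 0, 1]"

definition row12 :: "int list" where
  "row12 = [0, 1, 1, 1, -1, 1, 1, 0, 0, 1, -1, 0, -1]"

theorem proposition6p2:
  shows "\<exists>W1 W2 :: real^13^13. unbiased_weighing 9 W1 W2"
proof -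
  have rows: "\<forall>v\<in>{row1, row2, row12}. length v = 13 \<and> set v \<subseteq> {1, -1, 0} \<and>
                (\<forall>d<length v. list_correlation v v d = (if d = 0 then 9 else 0))"
    by code_simp
  have weighing: "weighing_matrix (of_int 9) (circulant (list_seq v :: 13 \<Rightarrow> real))"
    if "v \<in> {row1, row2, row12}" for v
    using rows that by (intro weighing_matrix_circulant_list_seq) auto
  have "length row1 = 13 \<and> (\<forall>d<length row1. list_correlation row1 row2 d = 3 * row12 ! d)"
    by code_simp
  then have "periodic_correlation (list_seq row1) (list_seq row2)
               = (\<lambda>d :: 13. of_int 3 * list_seq row12 d)"
    by (intro periodic_correlation_list_seq_scaled) auto
  moreover have "sqrt 9 = (3 :: real)"
    by (rule real_sqrt_unique) simp_all
  ultimately have "unbiased_weighing 9 (circulant (list_seq row1))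
                     (circulant (list_seq row2 :: 13 \<Rightarrow> real))"
    using weighing by (intro unbiased_weighing_circulant) auto
  then show ?thesis by blast
qed

end
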